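(* Let $(S,\mathscr{S})$ be a measurable space, $n\le N$, $g:S^n\to\mathbb{R}$ a function and $f:S^N\to\mathbb{R}$ a symmetric $\mathscr{S}^N$-measurable function. Then: (i) $\|U^N_ng\|\le\|g\|$; (ii) $U^{n_3}_{n_1}=U^{n_3}_{n_2}\circ U^{n_2}_{n_1}$ whenever $n_1\le n_2\le n_3$; (iii) $\|U^N_ng\|$ is nonincreasing in $N$ ($N\ge n$); (iv) $f$ is measurable with respect to the $\sigma$-algebra generated by the functions $U^N_n h$, where $h$ ranges over all measurable functions $S^n\to\mathbb{R}$.
   Context: $\|\cdot\|$ is the sup norm. A function on $S^k$ is symmetric if it is invariant under all permutations of its arguments. With $\mathfrak S[n,N]$ the set of injections $\{1,\ldots,n\}\to\{1,\ldots,N\}$ and $(N)_n=N(N-1)\cdots(N-n+1)$, $U^N_ng(x_1,\ldots,x_N)=\frac1{(N)_n}\sum_{\sigma\in\mathfrak S[n,N]}g(x_{\sigma(1)},\ldots,x_{\sigma(n)})$. *)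

theory Defs
  imports "HOL-Analysis.Analysis"
begin

text \<open>Points of S^n are extensional functions on {..<n}; S^n carries the product
  sigma-algebra PiM {..<n} (\<lambda>_. M).\<close>

abbreviation Spow :: "'a measure \<Rightarrow> nat \<Rightarrow> (nat \<Rightarrow> 'a) measure" where
  "Spow M n \<equiv> PiM {..<n} (\<lambda>_. M)"

text \<open>The set of injections {1..n} -> {1..N} (here indexed from 0).\<close>
definition injs :: "nat \<Rightarrow> nat \<Rightarrow> (nat \<Rightarrow> nat) set" where
  "injs n N = {\<sigma> \<in> {..<n} \<rightarrow>\<^sub>E {..<N}. inj_on \<sigma> {..<n}}"

definition falling :: "nat \<Rightarrow> nat \<Rightarrow> real" where
  "falling N n = (\<Prod>i<n. real N - real i)"

definition U :: "nat \<Rightarrow> nat \<Rightarrow> ((nat \<Rightarrow> 'a) \<Rightarrow> real) \<Rightarrow> (nat \<Rightarrow> 'a) \<Rightarrow> real" where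
  "U N n g x = (1 / falling N n) * (\<Sum>\<sigma>\<in>injs n N. g (restrict (\<lambda>i. x (\<sigma> i)) {..<n}))"

text \<open>Sup norm of a function on S^n (possibly infinite; 0 on an empty space).\<close>
definition supnorm :: "'a measure \<Rightarrow> nat \<Rightarrow> ((nat \<Rightarrow> 'a) \<Rightarrow> real) \<Rightarrow> ennreal" where
  "supnorm M n g = (SUP x \<in> space (Spow M n). ennreal \<bar>g x\<bar>)"

definition symmetric_fun :: "'a measure \<Rightarrow> nat \<Rightarrow> ((nat \<Rightarrow> 'a) \<Rightarrow> real) \<Rightarrow> bool" where
  "symmetric_fun M N f \<longleftrightarrow> (\<forall>\<pi> x. \<pi> permutes {..<N} \<longrightarrow> x \<in> space (Spow M N) \<longrightarrow>
      f (restrict (\<lambda>i. x (\<pi> i)) {..<N}) = f x)"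

definition U_sigma :: "'a measure \<Rightarrow> nat \<Rightarrow> nat \<Rightarrow> (nat \<Rightarrow> 'a) measure" where
  "U_sigma M N n = sigma (space (Spow M N))
     {U N n h -` B \<inter> space (Spow M N) | h B. h \<in> borel_measurable (Spow M n) \<and> B \<in> sets borel}"

end

theory Submission
  imports Defs "HOL-Combinatorics.Permutations"
begin

text \<open>
  U^N_n g (x) is the average of g over the (N)_n injective selections of n coordinates of x,
  which gives (i). For (ii), every injection {..<n1} \<rightarrow> {..<n3} arises equally often as a
  composite of injections {..<n1} \<rightarrow> {..<n2} \<rightarrow> {..<n3}, because every injection extends to a
  permutation; (iii) follows from (i) and U^N2_n = U^N2_N1 \<circ> U^N1_n.

  For (iv), taking h y = \<phi> (y 0) shows that every empirical sum \<Sum>k<N. \<phi> (x k) is measurable for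
  the generated \<sigma>-algebra. For a rectangle A = \<Pi>i<N. Y i, the number of permutations \<pi> with
  x \<circ> \<pi> \<in> A depends only on the multiset of the types {i. x k \<in> Y i} of the coordinates of x,
  and the multiplicities of that multiset are such empirical sums. A Dynkin argument extends the
  measurability of this count to every measurable A, and for symmetric f the count for
  A = f -` B is N! times the indicator of A.
\<close>

lemma finite_injs: "finite (injs n N)"
proof (rule finite_subset)
  show "injs n N \<subseteq> {..<n} \<rightarrow>\<^sub>E {..<N}" by (auto simp: injs_def)
qed (intro finite_PiE; simp)

lemma injs_restrict_eq: "\<sigma> \<in> injs n N \<Longrightarrow> restrict \<sigma> {..<n} = \<sigma>"
  by (auto simp: injs_def intro: PiE_restrict)

lemma injs_0: "injs 0 N = {\<lambda>_. undefined}"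
  by (auto simp: injs_def)

lemma injs_Suc_fiber:
  assumes \<rho>: "\<rho> \<in> injs n N"
  shows "{\<sigma>\<in>injs (Suc n) N. restrict \<sigma> {..<n} = \<rho>} = (\<lambda>k. \<rho>(n:=k)) ` ({..<N} - \<rho> ` {..<n})"
proof (intro equalityI subsetI)
  fix \<sigma> assume "\<sigma> \<in> {\<sigma>\<in>injs (Suc n) N. restrict \<sigma> {..<n} = \<rho>}"
  then have \<sigma>: "\<sigma> \<in> {..<Suc n} \<rightarrow>\<^sub>E {..<N}" "inj_on \<sigma> {..<Suc n}" and e: "restrict \<sigma> {..<n} = \<rho>"
    by (auto simp: injs_def)
  have "\<sigma> = \<rho>(n := \<sigma> n)"
  proof
    fix i show "\<sigma> i = (\<rho>(n := \<sigma> n)) i"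
      using \<sigma>(1) e[symmetric] by (cases "i < n"; cases "i = n") (auto simp: PiE_def extensional_def)
  qed
  moreover have "\<sigma> n \<in> {..<N} - \<rho> ` {..<n}"
  proof -
    have "\<sigma> n \<notin> \<sigma> ` {..<n}"
      using \<sigma>(2) unfolding inj_on_def by (metis image_iff lessThan_iff less_Suc_eq nat_neq_iff)
    moreover have "\<rho> ` {..<n} = \<sigma> ` {..<n}" using e[symmetric] by auto
    ultimately show ?thesis using \<sigma>(1) by auto
  qed
  ultimately show "\<sigma> \<in> (\<lambda>k. \<rho>(n:=k)) ` ({..<N} - \<rho> ` {..<n})" by blast
next
  fix \<sigma> assume "\<sigma> \<in> (\<lambda>k. \<rho>(n:=k)) ` ({..<N} - \<rho> ` {..<n})"
  then obtain k where k: "k < N" "k \<notin> \<rho> ` {..<n}" and \<sigma>: "\<sigma> = \<rho>(n:=k)" by auto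
  have \<rho>1: "\<rho> \<in> {..<n} \<rightarrow>\<^sub>E {..<N}" and \<rho>2: "inj_on \<rho> {..<n}" using \<rho> by (auto simp: injs_def)
  have "\<sigma> \<in> {..<Suc n} \<rightarrow>\<^sub>E {..<N}"
    using \<rho>1 k unfolding \<sigma> by (auto simp: PiE_def extensional_def Pi_def less_Suc_eq)
  moreover have "inj_on \<sigma> {..<Suc n}"
  proof -
    have "inj_on \<sigma> {..<n}" using \<rho>2 unfolding \<sigma> by (auto simp: inj_on_def)
    moreover have "\<sigma> n \<notin> \<sigma> ` ({..<n} - {n})" using k unfolding \<sigma> by auto
    ultimately show ?thesis by (simp add: lessThan_Suc)
  qed
  moreover have "restrict \<sigma> {..<n} = \<rho>"
    using \<rho>1 unfolding \<sigma> by (auto simp: PiE_def extensional_def restrict_def fun_eq_iff)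
  ultimately show "\<sigma> \<in> {\<sigma>\<in>injs (Suc n) N. restrict \<sigma> {..<n} = \<rho>}" by (simp add: injs_def)
qed

lemma card_injs_Suc_fiber:
  assumes \<rho>: "\<rho> \<in> injs n N"
  shows "card {\<sigma>\<in>injs (Suc n) N. restrict \<sigma> {..<n} = \<rho>} = N - n"
proof -
  have \<rho>1: "\<rho> \<in> {..<n} \<rightarrow>\<^sub>E {..<N}" and \<rho>2: "inj_on \<rho> {..<n}" using \<rho> by (auto simp: injs_def)
  have "inj_on (\<lambda>k. \<rho>(n:=k)) ({..<N} - \<rho> ` {..<n})"
    by (auto simp: inj_on_def fun_eq_iff)
  then have "card {\<sigma>\<in>injs (Suc n) N. restrict \<sigma> {..<n} = \<rho>} = card ({..<N} - \<rho> ` {..<n})"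
    unfolding injs_Suc_fiber[OF \<rho>] by (rule card_image)
  also have "\<dots> = N - card (\<rho> ` {..<n})"
    using \<rho>1 by (subst card_Diff_subset) auto
  also have "card (\<rho> ` {..<n}) = n" using \<rho>2 by (simp add: card_image)
  finally show ?thesis .
qed

lemma sum_injs_Suc_restrict:
  "(\<Sum>\<sigma>\<in>injs (Suc n) N. G (restrict \<sigma> {..<n})) = real (N - n) * (\<Sum>\<rho>\<in>injs n N. G \<rho>)"
proof -
  have "(\<lambda>\<sigma>. restrict \<sigma> {..<n}) ` injs (Suc n) N \<subseteq> injs n N"
    by (auto simp: injs_def PiE_def extensional_def Pi_def inj_on_def)
  then have "(\<Sum>\<sigma>\<in>injs (Suc n) N. G (restrict \<sigma> {..<n}))
      = (\<Sum>\<rho>\<in>injs n N. \<Sum>\<sigma>\<in>{\<sigma>\<in>injs (Suc n) N. restrict \<sigma> {..<n} = \<rho>}. G (restrict \<sigma> {..<n}))"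
    by (rule sum.group[symmetric, OF finite_injs finite_injs])
  also have "\<dots> = (\<Sum>\<rho>\<in>injs n N. real (N - n) * G \<rho>)"
    by (rule sum.cong) (auto simp: card_injs_Suc_fiber)
  finally show ?thesis by (simp add: sum_distrib_left)
qed

lemma sum_injs_restrict:
  assumes "m \<le> n"
  shows "(\<Sum>\<sigma>\<in>injs n N. G (restrict \<sigma> {..<m})) = (\<Prod>j\<in>{m..<n}. real (N - j)) * (\<Sum>\<rho>\<in>injs m N. G \<rho>)"
  using assms
proof (induction n arbitrary: G)
  case 0
  then show ?case by (simp add: injs_0)
next
  case (Suc n)
  show ?case
  proof (cases "m = Suc n")
    case True
    then show ?thesis by (auto intro!: sum.cong simp: injs_restrict_eq)
  next
    case False
    then have mn: "m \<le> n" using Suc.prems by simp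
    have "(\<Sum>\<sigma>\<in>injs (Suc n) N. G (restrict \<sigma> {..<m}))
        = (\<Sum>\<sigma>\<in>injs (Suc n) N. G (restrict (restrict \<sigma> {..<n}) {..<m}))"
      using mn by (intro sum.cong refl arg_cong[where f=G]) (auto simp: restrict_def fun_eq_iff)
    also have "\<dots> = real (N - n) * (\<Sum>\<rho>\<in>injs n N. G (restrict \<rho> {..<m}))"
      by (rule sum_injs_Suc_restrict)
    also have "\<dots> = (\<Prod>j\<in>{m..<Suc n}. real (N - j)) * (\<Sum>\<rho>\<in>injs m N. G \<rho>)"
      using mn by (simp add: Suc.IH prod.atLeastLessThan_Suc)
    finally show ?thesis .
  qed
qed

lemma card_injs: "n \<le> N \<Longrightarrow> real (card (injs n N)) = falling N n"
  using sum_injs_restrict[of 0 n "\<lambda>_. 1::real" N]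
  by (simp add: injs_0 falling_def atLeast0LessThan of_nat_diff)

lemma falling_pos: "n \<le> N \<Longrightarrow> falling N n > 0"
  unfolding falling_def by (intro prod_pos) auto

lemma falling_eq_mult:
  assumes "m \<le> n" "n \<le> N"
  shows "falling N n = (\<Prod>j\<in>{m..<n}. real (N - j)) * falling N m"
  using sum_injs_restrict[OF assms(1), of "\<lambda>_. 1::real" N] card_injs[OF assms(2)] card_injs[of m N] assms
  by simp

lemma sum_injs_one: "(\<Sum>\<rho>\<in>injs 1 N. G (\<rho> 0)) = (\<Sum>k<N. G k)"
proof (rule sum.reindex_bij_betw, rule bij_betw_imageI)
  show "inj_on (\<lambda>\<rho>. \<rho> 0) (injs 1 N)"
  proof (rule inj_onI)
    fix \<rho> \<rho>' assume "\<rho> \<in> injs 1 N" "\<rho>' \<in> injs 1 N" "\<rho> 0 = \<rho>' 0"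
    then show "\<rho> = \<rho>'"
      unfolding injs_def by (auto simp: fun_eq_iff PiE_def extensional_def) (metis neq0_conv)
  qed
  show "(\<lambda>\<rho>. \<rho> 0) ` injs 1 N = {..<N}"
  proof (intro equalityI subsetI)
    fix k assume "k \<in> {..<N}"
    then have "(\<lambda>i. if i = 0 then k else undefined) \<in> injs 1 N"
      by (auto simp: injs_def PiE_def extensional_def lessThan_Suc)
    then show "k \<in> (\<lambda>\<rho>. \<rho> 0) ` injs 1 N" by (rule rev_image_eqI) simp
  qed (auto simp: injs_def PiE_iff)
qed

lemma injs_extend_permutation:
  assumes \<tau>: "\<tau> \<in> injs m n"
  obtains p where "p permutes {..<n}" "\<And>i. i < m \<Longrightarrow> p i = \<tau> i"
proof -
  have \<tau>1: "\<tau> \<in> {..<m} \<rightarrow>\<^sub>E {..<n}" and \<tau>2: "inj_on \<tau> {..<m}" using \<tau> by (auto simp: injs_def)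
  have sub: "\<tau> ` {..<m} \<subseteq> {..<n}" using \<tau>1 by auto
  have card_range: "card (\<tau> ` {..<m}) = m" using \<tau>2 by (simp add: card_image)
  have mn: "m \<le> n" using card_mono[OF _ sub] card_range by simp
  define B where "B = {..<n} - \<tau> ` {..<m}"
  have "card B = n - m" unfolding B_def using sub card_range by (simp add: card_Diff_subset)
  then obtain b where b: "bij_betw b {m..<n} B"
    using finite_same_card_bij[of "{m..<n}" B] unfolding B_def by auto
  define p where "p i = (if i < m then \<tau> i else if i < n then b i else i)" for i
  have "bij_betw p {..<m} (\<tau> ` {..<m})"
    using inj_on_imp_bij_betw[OF \<tau>2] by (rule bij_betw_cong[THEN iffD1, rotated]) (simp add: p_def)
  moreover have "bij_betw p {m..<n} B"
    using b by (rule bij_betw_cong[THEN iffD1, rotated]) (simp add: p_def)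
  ultimately have "bij_betw p ({..<m} \<union> {m..<n}) (\<tau> ` {..<m} \<union> B)"
    by (rule bij_betw_combine) (auto simp: B_def)
  moreover have "{..<m} \<union> {m..<n} = {..<n}" using mn by auto
  moreover have "\<tau> ` {..<m} \<union> B = {..<n}" using sub by (auto simp: B_def)
  ultimately have "bij_betw p {..<n} {..<n}" by simp
  then have "p permutes {..<n}" by (rule bij_imp_permutes) (use mn in \<open>simp add: p_def\<close>)
  then show thesis by (rule that) (simp add: p_def)
qed

lemma restrict_comp_permutes_in_injs:
  assumes p: "p permutes {..<k}" and \<sigma>: "\<sigma> \<in> injs k N"
  shows "restrict (\<sigma> \<circ> p) {..<k} \<in> injs k N"
proof -
  have pk: "\<And>i. i < k \<Longrightarrow> p i < k" using permutes_in_image[OF p] by auto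
  have "inj_on (\<sigma> \<circ> p) {..<k}"
    using \<sigma> permutes_inj_on[OF p] pk
    by (intro comp_inj_on) (auto simp: injs_def inj_on_def permutes_image[OF p])
  then show ?thesis
    using \<sigma> pk by (auto simp: injs_def PiE_iff)
qed

lemma restrict_comp_permutes_inverse:
  assumes p: "p permutes {..<k}" and \<sigma>: "\<sigma> \<in> injs k N"
  shows "restrict (restrict (\<sigma> \<circ> p) {..<k} \<circ> inv p) {..<k} = \<sigma>"
proof
  have "\<sigma> \<in> extensional {..<k}" using \<sigma> by (auto simp: injs_def PiE_def)
  moreover have "inv p i < k" if "i < k" for i
    using permutes_in_image[OF permutes_inv[OF p]] that by auto
  ultimately show "restrict (restrict (\<sigma> \<circ> p) {..<k} \<circ> inv p) {..<k} i = \<sigma> i" for i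
    using permutes_inverses(1)[OF p, of i] by (cases "i < k") (auto simp: extensional_def)
qed

lemma sum_injs_comp_permutes:
  assumes p: "p permutes {..<k}"
  shows "(\<Sum>\<sigma>\<in>injs k N. G (restrict (\<sigma> \<circ> p) {..<k})) = (\<Sum>\<sigma>\<in>injs k N. G \<sigma>)"
proof (rule sum.reindex_bij_betw)
  have "inv (inv p) = p" using permutes_inv_inv[OF p] .
  then show "bij_betw (\<lambda>\<sigma>. restrict (\<sigma> \<circ> p) {..<k}) (injs k N) (injs k N)"
    using restrict_comp_permutes_inverse[OF p] restrict_comp_permutes_inverse[OF permutes_inv[OF p]]
      restrict_comp_permutes_in_injs[OF p] restrict_comp_permutes_in_injs[OF permutes_inv[OF p]]
    by (intro bij_betw_byWitness[where f'="\<lambda>\<sigma>. restrict (\<sigma> \<circ> inv p) {..<k}"]) auto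
qed

lemma sum_injs_comp_injs:
  assumes \<tau>: "\<tau> \<in> injs m n" and mn: "m \<le> n"
  shows "(\<Sum>\<sigma>\<in>injs n N. G (restrict (\<sigma> \<circ> \<tau>) {..<m})) = (\<Sum>\<sigma>\<in>injs n N. G (restrict \<sigma> {..<m}))"
proof -
  obtain p where p: "p permutes {..<n}" "\<And>i. i < m \<Longrightarrow> p i = \<tau> i"
    using injs_extend_permutation[OF \<tau>] by blast
  have "(\<Sum>\<sigma>\<in>injs n N. G (restrict \<sigma> {..<m}))
      = (\<Sum>\<sigma>\<in>injs n N. G (restrict (restrict (\<sigma> \<circ> p) {..<n}) {..<m}))"
    by (rule sum_injs_comp_permutes[OF p(1), symmetric])
  also have "\<dots> = (\<Sum>\<sigma>\<in>injs n N. G (restrict (\<sigma> \<circ> \<tau>) {..<m}))"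
    using p(2) mn by (intro sum.cong refl arg_cong[where f=G]) (auto simp: restrict_def fun_eq_iff)
  finally show ?thesis by simp
qed

lemma U_point_in_space:
  assumes "x \<in> space (Spow M N)" "\<sigma> \<in> injs n N"
  shows "restrict (\<lambda>i. x (\<sigma> i)) {..<n} \<in> space (Spow M n)"
  using assms by (auto simp: space_PiM PiE_iff injs_def)

lemma U_comp:
  assumes n12: "n1 \<le> n2" and n23: "n2 \<le> n3"
  shows "U n3 n1 h x = U n3 n2 (U n2 n1 h) x"
proof -
  define K where "K \<rho> = h (restrict (\<lambda>i. x (\<rho> i)) {..<n1})" for \<rho> :: "nat \<Rightarrow> nat"
  define P where "P = (\<Prod>j\<in>{n1..<n2}. real (n3 - j))"
  have inner: "U n2 n1 h (restrict (\<lambda>i. x (\<sigma> i)) {..<n2})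
      = (1 / falling n2 n1) * (\<Sum>\<tau>\<in>injs n1 n2. K (restrict (\<sigma> \<circ> \<tau>) {..<n1}))" for \<sigma>
    unfolding U_def K_def
    by (intro arg_cong2[where f="(*)"] refl sum.cong arg_cong[where f=h])
       (auto simp: restrict_def fun_eq_iff injs_def PiE_iff)
  have "(\<Sum>\<sigma>\<in>injs n2 n3. \<Sum>\<tau>\<in>injs n1 n2. K (restrict (\<sigma> \<circ> \<tau>) {..<n1}))
      = (\<Sum>\<tau>\<in>injs n1 n2. \<Sum>\<sigma>\<in>injs n2 n3. K (restrict \<sigma> {..<n1}))"
    using n12 by (subst sum.swap) (simp add: sum_injs_comp_injs)
  also have "\<dots> = falling n2 n1 * P * (\<Sum>\<rho>\<in>injs n1 n3. K \<rho>)"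
    using sum_injs_restrict[OF n12, of K n3] card_injs[OF n12] by (simp add: P_def)
  finally have outer: "(\<Sum>\<sigma>\<in>injs n2 n3. \<Sum>\<tau>\<in>injs n1 n2. K (restrict (\<sigma> \<circ> \<tau>) {..<n1}))
      = falling n2 n1 * P * (\<Sum>\<rho>\<in>injs n1 n3. K \<rho>)" .
  have "falling n3 n2 = P * falling n3 n1"
    unfolding P_def using n12 n23 by (rule falling_eq_mult)
  moreover have "falling n2 n1 > 0" "falling n3 n1 > 0" "P > 0"
    using falling_pos n12 n23 by (auto simp: P_def intro!: prod_pos)
  ultimately have "U n3 n2 (U n2 n1 h) x
      = (1 / falling n3 n2) * (\<Sum>\<sigma>\<in>injs n2 n3. (1 / falling n2 n1) * (\<Sum>\<tau>\<in>injs n1 n2. K (restrict (\<sigma> \<circ> \<tau>) {..<n1})))"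
    by (simp only: U_def[of n3 n2] inner)
  also have "\<dots> = (1 / falling n3 n2) * (1 / falling n2 n1) * (falling n2 n1 * P * (\<Sum>\<rho>\<in>injs n1 n3. K \<rho>))"
    by (simp only: sum_distrib_left[symmetric] outer mult.assoc)
  also have "\<dots> = U n3 n1 h x"
    using \<open>falling n3 n2 = P * falling n3 n1\<close> \<open>falling n2 n1 > 0\<close> \<open>P > 0\<close>
    by (simp add: U_def K_def)
  finally show ?thesis by simp
qed

lemma U_supnorm_le:
  assumes nN: "n \<le> N"
  shows "supnorm M N (U N n g) \<le> supnorm M n g"
  unfolding supnorm_def
proof (rule SUP_least)
  fix x assume x: "x \<in> space (Spow M N)"
  define S where "S = (SUP y \<in> space (Spow M n). ennreal \<bar>g y\<bar>)"
  show "ennreal \<bar>U N n g x\<bar> \<le> S"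
  proof (cases "S = top")
    case False
    then obtain s where s: "S = ennreal s" "s \<ge> 0"
      by (metis ennreal_cases ennreal_enn2real_if enn2real_nonneg)
    have bound: "\<bar>g y\<bar> \<le> s" if "y \<in> space (Spow M n)" for y
    proof -
      have "ennreal \<bar>g y\<bar> \<le> S" unfolding S_def using that by (rule SUP_upper)
      then show ?thesis using s by (simp add: ennreal_le_iff)
    qed
    have pos: "falling N n > 0" using falling_pos[OF nN] .
    have "\<bar>U N n g x\<bar> = (1 / falling N n) * \<bar>\<Sum>\<sigma>\<in>injs n N. g (restrict (\<lambda>i. x (\<sigma> i)) {..<n})\<bar>"
      unfolding U_def using pos by (simp add: abs_mult)
    also have "\<dots> \<le> (1 / falling N n) * (\<Sum>\<sigma>\<in>injs n N. \<bar>g (restrict (\<lambda>i. x (\<sigma> i)) {..<n})\<bar>)"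
      using pos by (intro mult_left_mono sum_abs) auto
    also have "\<dots> \<le> (1 / falling N n) * (\<Sum>\<sigma>\<in>injs n N. s)"
      using pos by (intro mult_left_mono sum_mono bound U_point_in_space[OF x]) auto
    also have "\<dots> = s" using card_injs[OF nN] pos by simp
    finally show ?thesis using s by (simp add: ennreal_leI)
  qed simp
qed

lemma U_supnorm_antimono:
  assumes "n \<le> N1" "N1 \<le> N2"
  shows "supnorm M N2 (U N2 n g) \<le> supnorm M N1 (U N1 n g)"
proof -
  have "supnorm M N2 (U N2 n g) = supnorm M N2 (U N2 N1 (U N1 n g))"
    unfolding supnorm_def by (intro SUP_cong refl arg_cong[where f="\<lambda>v. ennreal \<bar>v\<bar>"] U_comp[OF assms])
  also have "\<dots> \<le> supnorm M N1 (U N1 n g)" by (rule U_supnorm_le[OF assms(2)])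
  finally show ?thesis .
qed

lemma space_U_sigma: "space (U_sigma M N n) = space (Spow M N)"
  unfolding U_sigma_def by (rule space_measure_of_conv)

lemma sets_U_sigma: "sets (U_sigma M N n) = sigma_sets (space (Spow M N))
     {U N n h -` B \<inter> space (Spow M N) | h B. h \<in> borel_measurable (Spow M n) \<and> B \<in> sets borel}"
  unfolding U_sigma_def by (rule sets_measure_of) auto

lemma U_measurable_U_sigma:
  assumes h: "h \<in> borel_measurable (Spow M n)"
  shows "U N n h \<in> borel_measurable (U_sigma M N n)"
proof (rule measurableI)
  fix B :: "real set" assume "B \<in> sets borel"
  then show "U N n h -` B \<inter> space (U_sigma M N n) \<in> sets (U_sigma M N n)"
    unfolding sets_U_sigma space_U_sigma using h by (blast intro: sigma_sets.Basic)
qed simp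

lemma empirical_sum_measurable_U_sigma:
  fixes \<phi> :: "'a \<Rightarrow> real"
  assumes n: "1 \<le> n" "n \<le> N" and \<phi>: "\<phi> \<in> borel_measurable M"
  shows "(\<lambda>x. \<Sum>k<N. \<phi> (x k)) \<in> borel_measurable (U_sigma M N n)"
proof -
  define h where "h y = \<phi> (y 0)" for y :: "nat \<Rightarrow> 'a"
  define P where "P = (\<Prod>j\<in>{1..<n}. real (N - j))"
  have "h \<in> borel_measurable (Spow M n)"
    unfolding h_def using n \<phi> by (intro measurable_compose[OF measurable_component_singleton]) auto
  then have "(\<lambda>x. (falling N n / P) * U N n h x) \<in> borel_measurable (U_sigma M N n)"
    by (intro borel_measurable_times borel_measurable_const U_measurable_U_sigma)
  moreover have "U N n h x = (P / falling N n) * (\<Sum>k<N. \<phi> (x k))" for x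
    using sum_injs_restrict[OF n(1), of "\<lambda>\<rho>. \<phi> (x (\<rho> 0))" N] sum_injs_one[of "\<lambda>k. \<phi> (x k)" N] n(1)
    by (simp add: U_def h_def P_def)
  moreover have "P > 0" "falling N n > 0"
    using n falling_pos by (auto simp: P_def intro!: prod_pos)
  ultimately show ?thesis by simp
qed

definition permute_coords :: "nat \<Rightarrow> (nat \<Rightarrow> nat) \<Rightarrow> (nat \<Rightarrow> 'a) \<Rightarrow> nat \<Rightarrow> 'a" where
  "permute_coords N \<pi> x = restrict (\<lambda>i. x (\<pi> i)) {..<N}"

definition sym_count :: "nat \<Rightarrow> (nat \<Rightarrow> 'a) set \<Rightarrow> (nat \<Rightarrow> 'a) \<Rightarrow> real" where
  "sym_count N A x = (\<Sum>\<pi> | \<pi> permutes {..<N}. indicator A (permute_coords N \<pi> x))"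

definition coord_type :: "nat \<Rightarrow> (nat \<Rightarrow> 'a set) \<Rightarrow> 'a \<Rightarrow> nat set" where
  "coord_type N Y y = {i. i < N \<and> y \<in> Y i}"

definition type_profile :: "nat \<Rightarrow> (nat \<Rightarrow> 'a set) \<Rightarrow> (nat \<Rightarrow> 'a) \<Rightarrow> nat set multiset" where
  "type_profile N Y x = mset (map (\<lambda>k. coord_type N Y (x k)) [0..<N])"

lemma permute_coords_in_space:
  assumes "\<pi> permutes {..<N}" "x \<in> space (Spow M N)"
  shows "permute_coords N \<pi> x \<in> space (Spow M N)"
  using assms permutes_in_image[OF assms(1)] by (auto simp: permute_coords_def space_PiM PiE_iff)

lemma sym_count_PiE_eq_if_type_profile_eq:
  assumes "type_profile N Y x = type_profile N Y y"
  shows "sym_count N (PiE {..<N} Y) x = sym_count N (PiE {..<N} Y) y"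
proof -
  let ?t = "\<lambda>z k. coord_type N Y (z k)"
  obtain p where p: "p permutes {..<N}" "permute_list p (map (?t y) [0..<N]) = map (?t x) [0..<N]"
    using mset_eq_permutation[OF assms[unfolded type_profile_def]] by auto
  have type_p: "?t y (p k) = ?t x k" if "k < N" for k
    using arg_cong[OF p(2), of "\<lambda>xs. xs ! k"] permutes_in_image[OF p(1)] that
    by (simp add: permute_list_nth p(1))
  define in_rect where "in_rect z \<pi> = (if \<forall>i<N. z (\<pi> i) \<in> Y i then 1 else 0 :: real)"
    for z :: "nat \<Rightarrow> 'a" and \<pi> :: "nat \<Rightarrow> nat"
  have sym_count_eq: "sym_count N (PiE {..<N} Y) z = (\<Sum>\<pi> | \<pi> permutes {..<N}. in_rect z \<pi>)" for z
    unfolding sym_count_def in_rect_def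
    by (intro sum.cong refl) (auto simp: permute_coords_def indicator_def restrict_PiE_iff)
  have "in_rect y (p \<circ> \<pi>) = in_rect x \<pi>" if "\<pi> permutes {..<N}" for \<pi>
  proof -
    have "y (p (\<pi> i)) \<in> Y i \<longleftrightarrow> x (\<pi> i) \<in> Y i" if "i < N" for i
      using type_p[of "\<pi> i"] permutes_in_image[OF \<open>\<pi> permutes {..<N}\<close>] that
      by (auto simp: coord_type_def)
    then show ?thesis by (simp add: in_rect_def)
  qed
  then show ?thesis
    unfolding sym_count_eq using setum_permutations_compose_left[OF p(1), of "in_rect y"] by simp
qed

lemma sets_coord_type_eq:
  assumes "\<And>i. i < N \<Longrightarrow> Y i \<in> sets M"
  shows "{y \<in> space M. coord_type N Y y = T} \<in> sets M"
proof -
  have "{y \<in> space M. coord_type N Y y = T}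
      = {y \<in> space M. T \<subseteq> {..<N} \<and> (\<forall>i\<in>{..<N}. y \<in> Y i \<longleftrightarrow> i \<in> T)}"
    by (auto simp: coord_type_def)
  also have "\<dots> \<in> sets M" using assms by measurable
  finally show ?thesis .
qed

lemma count_type_profile_measurable_U_sigma:
  assumes n: "1 \<le> n" "n \<le> N" and Y: "\<And>i. i < N \<Longrightarrow> Y i \<in> sets M"
  shows "(\<lambda>x. real (count (type_profile N Y x) T)) \<in> borel_measurable (U_sigma M N n)"
proof -
  let ?A = "{y. coord_type N Y y = T}"
  have "(indicator ?A :: 'a \<Rightarrow> real) \<in> borel_measurable M"
    using sets_coord_type_eq[OF Y] by (simp add: borel_measurable_indicator_iff Int_def conj_commute)
  then have "(\<lambda>x. \<Sum>k<N. indicator ?A (x k) :: real) \<in> borel_measurable (U_sigma M N n)"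
    by (rule empirical_sum_measurable_U_sigma[OF n])
  moreover have "real (count (type_profile N Y x) T) = (\<Sum>k<N. indicator ?A (x k))" for x
  proof -
    have "real (count (mset (map t [0..<m])) T) = (\<Sum>k<m. of_bool (t k = T))" for t :: "nat \<Rightarrow> nat set" and m
      by (induction m) auto
    then show ?thesis unfolding type_profile_def indicator_def mem_Collect_eq .
  qed
  ultimately show ?thesis by simp
qed

lemma type_profile_measurable_U_sigma:
  assumes n: "1 \<le> n" "n \<le> N" and Y: "\<And>i. i < N \<Longrightarrow> Y i \<in> sets M"
  shows "type_profile N Y \<in> measurable (U_sigma M N n) (count_space (multisets_of_size (Pow {..<N}) N))"
proof (subst measurable_count_space_eq2, intro finite_multisets_of_size finite_Pow_iff[THEN iffD2] finite_lessThan; intro conjI ballI)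
  have in_A: "type_profile N Y x \<in> multisets_of_size (Pow {..<N}) N" for x
    by (auto simp: type_profile_def multisets_of_size_def coord_type_def)
  then show "type_profile N Y \<in> space (U_sigma M N n) \<rightarrow> multisets_of_size (Pow {..<N}) N"
    by blast
  fix a assume a: "a \<in> multisets_of_size (Pow {..<N}) N"
  have "type_profile N Y -` {a} \<inter> space (U_sigma M N n)
      = {x \<in> space (U_sigma M N n). \<forall>T\<in>Pow {..<N}. real (count (type_profile N Y x) T) = real (count a T)}"
  proof -
    have "type_profile N Y x = a \<longleftrightarrow> (\<forall>T\<in>Pow {..<N}. count (type_profile N Y x) T = count a T)" for x
      using a in_A[of x] unfolding multisets_of_size_def
      by (auto intro!: multiset_eqI) (metis count_eq_zero_iff subsetD)
    then show ?thesis by auto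
  qed
  also have "\<dots> \<in> sets (U_sigma M N n)"
    using count_type_profile_measurable_U_sigma[OF n Y] by measurable
  finally show "type_profile N Y -` {a} \<inter> space (U_sigma M N n) \<in> sets (U_sigma M N n)" .
qed

lemma borel_measurable_factor_count_space:
  assumes g: "g \<in> measurable M (count_space A)"
    and f: "\<And>x y. x \<in> space M \<Longrightarrow> y \<in> space M \<Longrightarrow> g x = g y \<Longrightarrow> f x = f y"
  shows "f \<in> borel_measurable M"
proof -
  define F where "F a = f (SOME x. x \<in> space M \<and> g x = a)" for a
  have "F (g x) = f x" if "x \<in> space M" for x
    unfolding F_def using that by (metis (mono_tags, lifting) f someI_ex)
  moreover have "(\<lambda>x. F (g x)) \<in> borel_measurable M"
    using g by (rule measurable_compose) simp
  ultimately show ?thesis by (simp cong: measurable_cong)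
qed

lemma sym_count_PiE_measurable_U_sigma:
  assumes n: "1 \<le> n" "n \<le> N" and Y: "\<And>i. i < N \<Longrightarrow> Y i \<in> sets M"
  shows "sym_count N (PiE {..<N} Y) \<in> borel_measurable (U_sigma M N n)"
  using type_profile_measurable_U_sigma[OF n, of Y] Y
  by (blast intro: borel_measurable_factor_count_space sym_count_PiE_eq_if_type_profile_eq)

lemma sym_count_measurable_U_sigma:
  assumes n: "1 \<le> n" "n \<le> N" and A: "A \<in> sets (Spow M N)"
  shows "sym_count N A \<in> borel_measurable (U_sigma M N n)"
proof -
  let ?\<Omega> = "PiE {..<N} (\<lambda>_. space M)"
  let ?perms = "{\<pi>. \<pi> permutes {..<N}}"
  have space: "space (U_sigma M N n) = ?\<Omega>" by (simp add: space_U_sigma space_PiM)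
  from A have "A \<in> sigma_sets ?\<Omega> (prod_algebra {..<N} (\<lambda>_. M))" by (simp add: sets_PiM)
  with Int_stable_prod_algebra prod_algebra_sets_into_space show ?thesis
  proof (induction rule: sigma_sets_induct_disjoint)
    case (basic A)
    then obtain J E where A: "A = prod_emb {..<N} (\<lambda>_. M) J (PiE J E)" and J: "J \<subseteq> {..<N}"
      and E: "\<And>i. i \<in> J \<Longrightarrow> E i \<in> sets M"
      by (auto elim!: prod_algebraE)
    have "A = PiE {..<N} (\<lambda>i. if i \<in> J then E i else space M)"
      unfolding A using J E by (subst prod_emb_PiE) (auto dest: sets.sets_into_space)
    then show ?case
      using E by (simp add: sym_count_PiE_measurable_U_sigma[OF n])
  next
    case empty
    then show ?case by (simp add: sym_count_def)
  next
    case (compl A)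
    have "sym_count N (?\<Omega> - A) x = fact N - sym_count N A x" if "x \<in> space (U_sigma M N n)" for x
    proof -
      have "permute_coords N \<pi> x \<in> ?\<Omega>" if "\<pi> permutes {..<N}" for \<pi>
        using permute_coords_in_space[OF that] \<open>x \<in> space (U_sigma M N n)\<close>
        by (simp add: space space_PiM)
      then have "sym_count N (?\<Omega> - A) x = (\<Sum>\<pi>\<in>?perms. 1 - indicator A (permute_coords N \<pi> x))"
        unfolding sym_count_def by (intro sum.cong) (auto simp: indicator_def)
      also have "\<dots> = fact N - sym_count N A x"
        by (simp add: sym_count_def sum_subtractf card_permutations)
      finally show ?thesis .
    qed
    moreover have "(\<lambda>x. fact N - sym_count N A x) \<in> borel_measurable (U_sigma M N n)"
      using compl.IH by measurable
    ultimately show ?case by (subst measurable_cong) auto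
  next
    case (union A)
    show ?case
    proof (rule borel_measurable_LIMSEQ_real)
      fix x
      have "(\<lambda>m. \<Sum>i<m. indicator (A i) (permute_coords N \<pi> x) :: real)
          \<longlonglongrightarrow> indicator (\<Union>i. A i) (permute_coords N \<pi> x)" for \<pi>
        using indicator_sums[of A] union.hyps(1) unfolding disjoint_family_on_def sums_def by simp
      then have "(\<lambda>m. \<Sum>\<pi>\<in>?perms. \<Sum>i<m. indicator (A i) (permute_coords N \<pi> x) :: real)
          \<longlonglongrightarrow> sym_count N (\<Union>i. A i) x"
        unfolding sym_count_def by (rule tendsto_sum)
      then show "(\<lambda>m. \<Sum>i<m. sym_count N (A i) x) \<longlonglongrightarrow> sym_count N (\<Union>i. A i) x"
        unfolding sym_count_def by (subst sum.swap) simp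
    next
      show "(\<lambda>x. \<Sum>i<m. sym_count N (A i) x) \<in> borel_measurable (U_sigma M N n)" for m
        using union.IH by measurable
    qed
  qed
qed

lemma symmetric_fun_measurable_U_sigma:
  assumes n: "1 \<le> n" "n \<le> N"
    and f: "f \<in> borel_measurable (Spow M N)" and sym: "symmetric_fun M N f"
  shows "f \<in> borel_measurable (U_sigma M N n)"
proof (rule measurableI)
  fix B :: "real set" assume "B \<in> sets borel"
  define C where "C = f -` B \<inter> space (Spow M N)"
  have C: "C \<in> sets (Spow M N)" unfolding C_def using f \<open>B \<in> sets borel\<close> by (rule measurable_sets)
  have "sym_count N C x = fact N * indicator C x" if x: "x \<in> space (U_sigma M N n)" for x
  proof -
    have "indicator C (permute_coords N \<pi> x) = (indicator C x :: real)" if "\<pi> permutes {..<N}" for \<pi>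
      using sym permute_coords_in_space[OF that] that x
      by (auto simp: C_def indicator_def symmetric_fun_def permute_coords_def space_U_sigma)
    then show ?thesis
      by (simp add: sym_count_def card_permutations)
  qed
  then have "(\<lambda>x. sym_count N C x / fact N) \<in> borel_measurable (U_sigma M N n) \<longleftrightarrow>
      (indicator C :: _ \<Rightarrow> real) \<in> borel_measurable (U_sigma M N n)"
    by (intro measurable_cong) simp
  moreover have "(\<lambda>x. sym_count N C x / fact N) \<in> borel_measurable (U_sigma M N n)"
    using sym_count_measurable_U_sigma[OF n C] by measurable
  ultimately have "(indicator C :: _ \<Rightarrow> real) \<in> borel_measurable (U_sigma M N n)" by blast
  then show "f -` B \<inter> space (U_sigma M N n) \<in> sets (U_sigma M N n)"
    by (simp add: borel_measurable_indicator_iff C_def space_U_sigma)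
qed simp

theorem lemma3:
  fixes M :: "'a measure" and n N :: nat
    and g :: "(nat \<Rightarrow> 'a) \<Rightarrow> real" and f :: "(nat \<Rightarrow> 'a) \<Rightarrow> real"
  assumes "1 \<le> n" and "n \<le> N"
    and "f \<in> borel_measurable (Spow M N)" and "symmetric_fun M N f"
  shows "supnorm M N (U N n g) \<le> supnorm M n g
    \<and> (\<forall>n1 n2 n3 (h :: (nat \<Rightarrow> 'a) \<Rightarrow> real). n1 \<le> n2 \<longrightarrow> n2 \<le> n3 \<longrightarrow>
           (\<forall>x \<in> space (Spow M n3). U n3 n1 h x = U n3 n2 (U n2 n1 h) x))
    \<and> (\<forall>N1 N2. n \<le> N1 \<longrightarrow> N1 \<le> N2 \<longrightarrow> supnorm M N2 (U N2 n g) \<le> supnorm M N1 (U N1 n g))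
    \<and> f \<in> borel_measurable (U_sigma M N n)"
  using U_supnorm_le[OF assms(2)] U_comp U_supnorm_antimono symmetric_fun_measurable_U_sigma[OF assms]
  by blast

end
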